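(* Let $S\subset\mathcal P$ be a rectangular lattice. Then every bounded region of the line pattern $\mathcal L_S$ is a polygon with at most $4$ sides (i.e. a triangle or a quadrilateral).
   Context: $\mathcal P=\mathbb{R}^2\setminus\{(0,0)\}$; for $P=(A,B)\in\mathcal P$, $L_P$ is the line $Ax+By=1$ in $\mathbb{R}^2$; $\mathcal L_S=\{L_P\mid P\in S\}$. A rectangular lattice is a set of the form $S=\{(a+k\delta_x,\,b+j\delta_y)\mid k,j\in\mathbb{Z},\ 0\le k\le N,\ 0\le j\le M\}\setminus\{(0,0)\}$, where $(a,b)\ne(0,0)$, $\delta_x,\delta_y>0$, $N,M\in\mathbb{Z}_{\ge0}$, and the corners $(a,b+M\delta_y)$, $(a+N\delta_x,b)$, $(a+N\delta_x,b+M\delta_y)$ are all different from $(0,0)$. The regions of $\mathcal L_S$ are the closures of the connected components of $\mathbb{R}^2\setminus\bigcup_{P\in S}L_P$. *)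

theory Defs
  imports "HOL-Analysis.Analysis"
begin

definition line_of :: "real \<times> real \<Rightarrow> (real \<times> real) set" where
  "line_of P = {(x, y). fst P * x + snd P * y = 1}"

definition rect_lattice_set ::
  "real \<Rightarrow> real \<Rightarrow> real \<Rightarrow> real \<Rightarrow> nat \<Rightarrow> nat \<Rightarrow> (real \<times> real) set" where
  "rect_lattice_set a b dx dy N M =
     {(a + real k * dx, b + real j * dy) | k j. k \<le> N \<and> j \<le> M} - {(0, 0)}"

definition is_rectangular_lattice :: "(real \<times> real) set \<Rightarrow> bool" where
  "is_rectangular_lattice S \<longleftrightarrow>
     (\<exists>a b dx dy N M. (a, b) \<noteq> (0, 0) \<and> dx > 0 \<and> dy > 0 \<and>
        (a, b + real M * dy) \<noteq> (0, 0) \<and> (a + real N * dx, b) \<noteq> (0, 0) \<and>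
        (a + real N * dx, b + real M * dy) \<noteq> (0, 0) \<and>
        S = rect_lattice_set a b dx dy N M)"

definition regions :: "(real \<times> real) set \<Rightarrow> (real \<times> real) set set" where
  "regions S = closure ` components (UNIV - (\<Union>P\<in>S. line_of P))"

end

(* A region is the closure of the cell cut out by the sign conditions of all lines: a compact
   convex polygon, hence the convex hull of its vertices, each of which lies on two lines.
   Indexing the lattice points by the grid {0..N} \<times> {0..M}, the values of the line equations at
   a fixed point form an affine function of the grid index.  Call a line far if it separates the
   region from the origin.  Two vertices lying only on far lines (or only on near lines) give
   affine functions with the same sign pattern on the grid, each vanishing at two grid points; a
   lattice-point argument shows that such functions have the same zeros, so the vertices
   coincide.  A vertex on lines of both kinds has a supporting line through the origin, and three
   such vertices would need pairwise opposite orientations.  This leaves at most 1 + 1 + 2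
   vertices.  Without far lines every vertex is the common point of the lines of one edge of the
   lattice, an axis point such as (0, 1/b). *)

theory Submission
  imports Defs
begin

section \<open>Affine functions on an integer grid\<close>

definition grid :: "int \<Rightarrow> int \<Rightarrow> (int \<times> int) set" where
  "grid N M = {0..N} \<times> {0..M}"

lemma mem_grid [simp]: "(k, j) \<in> grid N M \<longleftrightarrow> 0 \<le> k \<and> k \<le> N \<and> 0 \<le> j \<and> j \<le> M"
  by (simp add: grid_def)

lemma finite_grid [simp]: "finite (grid N M)"
  by (simp add: grid_def)

lemma involution_image_eq:
  "(\<And>x. x \<in> A \<Longrightarrow> f x \<in> A) \<Longrightarrow> (\<And>x. f (f x) = x) \<Longrightarrow> f ` A = A"
  by (metis image_subset_iff subsetI subset_antisym imageI)

lemma reflect_fst_grid: "(\<lambda>(k, j). (N - k, j)) ` grid N M = grid N M"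
  by (rule involution_image_eq) auto

lemma reflect_snd_grid: "(\<lambda>(k, j). (k, M - j)) ` grid N M = grid N M"
  by (rule involution_image_eq) auto

lemma reflect_grid: "(\<lambda>(k, j). (N - k, M - j)) ` grid N M = grid N M"
  by (rule involution_image_eq) auto

lemma swap_grid: "prod.swap ` grid M N = grid N M"
  by (simp add: grid_def product_swap)

definition aff :: "real \<Rightarrow> real \<Rightarrow> real \<Rightarrow> int \<times> int \<Rightarrow> real" where
  "aff u v w p = u * of_int (fst p) + v * of_int (snd p) + w"

lemma aff_apply [simp]: "aff u v w (k, j) = u * of_int k + v * of_int j + w"
  by (simp add: aff_def)

lemma aff_comp_reflect_fst: "aff u v w \<circ> (\<lambda>(k, j). (N - k, j)) = aff (- u) v (w + u * of_int N)"
  by (auto simp: fun_eq_iff algebra_simps)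

lemma aff_comp_reflect_snd: "aff u v w \<circ> (\<lambda>(k, j). (k, M - j)) = aff u (- v) (w + v * of_int M)"
  by (auto simp: fun_eq_iff algebra_simps)

lemma aff_comp_swap: "aff u v w \<circ> prod.swap = aff v u w"
  by (auto simp: fun_eq_iff algebra_simps)

definition same_signs_on :: "'a set \<Rightarrow> ('a \<Rightarrow> real) \<Rightarrow> ('a \<Rightarrow> real) \<Rightarrow> bool" where
  "same_signs_on A f g \<longleftrightarrow> (\<forall>p\<in>A. 0 \<le> f p \<longleftrightarrow> 0 \<le> g p)"

definition same_zeros_on :: "'a set \<Rightarrow> ('a \<Rightarrow> real) \<Rightarrow> ('a \<Rightarrow> real) \<Rightarrow> bool" where
  "same_zeros_on A f g \<longleftrightarrow> (\<forall>p\<in>A. f p = 0 \<longleftrightarrow> g p = 0)"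

definition two_zeros_on :: "'a set \<Rightarrow> ('a \<Rightarrow> real) \<Rightarrow> bool" where
  "two_zeros_on A f \<longleftrightarrow> (\<exists>p\<in>A. \<exists>q\<in>A. p \<noteq> q \<and> f p = 0 \<and> f q = 0)"

lemma same_signs_on_sym: "same_signs_on A f g \<Longrightarrow> same_signs_on A g f"
  by (auto simp: same_signs_on_def)

lemma same_signs_on_trans:
  "same_signs_on A f g \<Longrightarrow> same_signs_on A g h \<Longrightarrow> same_signs_on A f h"
  by (auto simp: same_signs_on_def)

lemma same_signs_on_comp:
  "\<sigma> ` A = B \<Longrightarrow> same_signs_on B f g \<Longrightarrow> same_signs_on A (f \<circ> \<sigma>) (g \<circ> \<sigma>)"
  by (auto simp: same_signs_on_def)

lemma two_zeros_on_comp: "\<sigma> ` A = B \<Longrightarrow> two_zeros_on B f \<Longrightarrow> two_zeros_on A (f \<circ> \<sigma>)"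
  unfolding two_zeros_on_def by (smt (verit) comp_apply imageE)

lemma same_zeros_on_comp_iff:
  "\<sigma> ` A = B \<Longrightarrow> same_zeros_on A (f \<circ> \<sigma>) (g \<circ> \<sigma>) \<longleftrightarrow> same_zeros_on B f g"
  by (auto simp: same_zeros_on_def)

lemma same_signs_on_convex_comb:
  assumes "same_signs_on A f g" "0 \<le> t" "t \<le> 1"
  shows "same_signs_on A f (\<lambda>p. (1 - t) * f p + t * g p)"
  unfolding same_signs_on_def
proof
  fix p assume "p \<in> A"
  then have "0 \<le> f p \<longleftrightarrow> 0 \<le> g p" using assms(1) by (simp add: same_signs_on_def)
  moreover have "0 \<le> (1 - t) * f p + t * g p" if "0 \<le> f p" "0 \<le> g p"
    using that assms(2,3) by simp
  moreover have "(1 - t) * f p + t * g p < 0" if "f p < 0" "g p < 0"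
  proof (cases "t = 0")
    case False
    then have "t * g p < 0" using that assms(2) by (simp add: mult_pos_neg)
    moreover have "(1 - t) * f p \<le> 0" using that assms(3) by (simp add: mult_nonneg_nonpos)
    ultimately show ?thesis by linarith
  qed (use that in simp)
  ultimately show "0 \<le> f p \<longleftrightarrow> 0 \<le> (1 - t) * f p + t * g p"
    by (meson not_le)
qed

lemma last_zero_of_descending_line:
  assumes "u > 0" "v > 0" and zeros: "two_zeros_on (grid N M) (aff u v w)"
  obtains k j m n where "(k, j) \<in> grid N M" "aff u v w (k, j) = 0"
    "m > 0" "n > 0" "u * of_int m = v * of_int n"
    "(k - m, j + n) \<in> grid N M" "(k + m, j - n) \<notin> grid N M"
proof -
  define T where "T = {p \<in> grid N M. aff u v w p = 0}"
  obtain p q where pq: "p \<in> T" "q \<in> T" "p \<noteq> q"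
    using zeros by (auto simp: two_zeros_on_def T_def)
  have fin: "finite (fst ` T)" by (simp add: T_def)
  then have "Max (fst ` T) \<in> fst ` T" using pq(1) by (intro Max_in) auto
  then obtain k j where kj: "(k, j) \<in> T" "k = Max (fst ` T)" by force
  have last: "\<And>p. p \<in> T \<Longrightarrow> fst p \<le> k" using fin kj(2) by simp
  obtain k' j' where kj': "(k', j') \<in> T" "(k', j') \<noteq> (k, j)"
    using pq by (cases p, cases q) auto
  define m where "m = k - k'"
  define n where "n = j' - j"
  have zero: "aff u v w (k, j) = 0" "aff u v w (k', j') = 0" using kj kj' by (simp_all add: T_def)
  then have slope: "u * of_int m = v * of_int n"
    by (simp add: m_def n_def algebra_simps)
  have "k' \<le> k" using last[OF kj'(1)] by simp
  moreover have "k' \<noteq> k"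
  proof
    assume "k' = k"
    then have "n = 0" using slope \<open>v > 0\<close> by (simp add: m_def n_def)
    then show False using kj'(2) \<open>k' = k\<close> by (simp add: m_def n_def)
  qed
  ultimately have "m > 0" by (simp add: m_def n_def)
  have "n > 0"
  proof -
    have "0 < v * of_int n" using slope \<open>m > 0\<close> \<open>u > 0\<close> by (metis mult_pos_pos of_int_0_less_iff)
    then show ?thesis using \<open>v > 0\<close> by (simp add: zero_less_mult_iff)
  qed
  have "(k + m, j - n) \<notin> grid N M"
  proof
    assume "(k + m, j - n) \<in> grid N M"
    moreover have "aff u v w (k + m, j - n) = 0"
      using zero(1) slope by (simp add: algebra_simps)
    ultimately have "(k + m, j - n) \<in> T" by (simp add: T_def)
    then have "k + m \<le> k" using last by fastforce
    then show False using \<open>m > 0\<close> by simp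
  qed
  moreover have "(k - m, j + n) \<in> grid N M" using kj' by (simp add: m_def n_def T_def)
  moreover have "(k, j) \<in> grid N M" using kj(1) by (simp add: T_def)
  ultimately show thesis using that zero(1) slope \<open>m > 0\<close> \<open>n > 0\<close> by blast
qed

lemma first_zero_of_descending_line:
  assumes "u > 0" "v > 0" and zeros: "two_zeros_on (grid N M) (aff u v w)"
  obtains k j m n where "(k, j) \<in> grid N M" "aff u v w (k, j) = 0"
    "m > 0" "n > 0" "u * of_int m = v * of_int n"
    "(k + m, j - n) \<in> grid N M" "(k - m, j + n) \<notin> grid N M"
proof -
  let ?\<rho> = "\<lambda>(k, j). (N - k, M - j)"
  define w' where "w' = - (w + u * of_int N + v * of_int M)"
  have reflected: "aff u v w' = uminus \<circ> aff u v w \<circ> ?\<rho>"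
    by (auto simp: fun_eq_iff w'_def algebra_simps)
  have "two_zeros_on (grid N M) (aff u v w')"
    unfolding reflected using two_zeros_on_comp[OF reflect_grid zeros]
    by (simp add: two_zeros_on_def)
  from last_zero_of_descending_line[OF assms(1,2) this]
  obtain k j m n where "(k, j) \<in> grid N M" "aff u v w' (k, j) = 0"
    "m > 0" "n > 0" "u * of_int m = v * of_int n"
    "(k - m, j + n) \<in> grid N M" "(k + m, j - n) \<notin> grid N M" .
  then show thesis
    using that[of "N - k" "M - j" m n] by (auto simp: reflected algebra_simps)
qed

lemma lattice_steps_contradiction:
  fixes k1 j1 m1 n1 k2 j2 m2 n2 N M :: int
  assumes pos: "m1 > 0" "n1 > 0" "m2 > 0" "n2 > 0"
    and in1: "(k1 - m1, j1 + n1) \<in> grid N M" and out1: "(k1 + m1, j1 - n1) \<notin> grid N M"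
    and in2: "(k2 + m2, j2 - n2) \<in> grid N M" and out2: "(k2 - m2, j2 + n2) \<notin> grid N M"
    and ord: "k1 \<le> k2" "j2 \<le> j1"
    and steeper: "n2 * m1 < n1 * m2" and below: "(n1 - 1) * m2 < n2 * m1"
  shows False
proof -
  have "k1 + m1 > N \<or> j1 - n1 < 0" using in1 out1 pos by auto
  moreover have "k2 - m2 < 0 \<or> j2 + n2 > M" using in2 out2 pos by auto
  ultimately consider "k1 + m1 > N" "j2 + n2 > M" | "k1 + m1 > N" "k2 - m2 < 0"
    | "j1 - n1 < 0" "j2 + n2 > M" | "j1 - n1 < 0" "k2 - m2 < 0"
    by blast
  then show False
  proof cases
    case 1
    then have "m2 < m1" "n1 < n2" using in1 in2 ord by auto
    then have "n1 * m2 < n2 * m1" using pos mult_strict_mono'[of n1 n2 m2 m1] by simp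
    then show ?thesis using steeper by linarith
  next
    case 4
    then have "m1 \<le> m2 - 1" "n2 \<le> n1 - 1" using in1 in2 ord by auto
    then have "n2 * m1 \<le> (n1 - 1) * m2" using pos by (intro mult_mono) auto
    then show ?thesis using below by linarith
  qed (use in1 in2 ord in auto)
qed

lemma wedge_nonneg:
  fixes A B u1 v1 u2 v2 :: real
  assumes pos: "u1 > 0" "v1 > 0" "u2 > 0" "v2 > 0" and steeper: "u2 * v1 < u1 * v2"
    and h1: "v1 * B \<le> u1 * A" and h2: "u2 * A \<le> v2 * B"
  shows "0 \<le> A" "0 \<le> B"
proof -
  have "(u1 * v2 - u2 * v1) * A = v2 * (u1 * A - v1 * B) + v1 * (v2 * B - u2 * A)"
    by (simp add: algebra_simps)
  also have "\<dots> \<ge> 0" using h1 h2 pos by simp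
  finally show "0 \<le> A" using steeper by (simp add: zero_le_mult_iff)
  then have "0 \<le> v2 * B" using h2 pos by (smt (verit) mult_nonneg_nonneg)
  then show "0 \<le> B" using pos by (simp add: zero_le_mult_iff)
qed

lemma int_steps_of_steeper_slope:
  fixes u1 v1 u2 v2 :: real and m1 n1 m2 n2 :: int
  assumes "v1 > 0" "v2 > 0" "m1 > 0" "m2 > 0"
    and step1: "u1 * of_int m1 = v1 * of_int n1" and step2: "u2 * of_int m2 = v2 * of_int n2"
    and steeper: "u2 * v1 < u1 * v2"
  shows "n2 * m1 < n1 * m2"
proof -
  have "0 < (u1 * v2 - u2 * v1) * (of_int m1 * of_int m2)"
    using assms by simp
  also have "\<dots> = v2 * of_int m2 * (u1 * of_int m1) - v1 * of_int m1 * (u2 * of_int m2)"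
    by (simp add: algebra_simps)
  also have "\<dots> = (v1 * v2) * of_int (n1 * m2 - n2 * m1)"
    unfolding step1 step2 by (simp add: algebra_simps)
  finally have "0 < real_of_int (n1 * m2 - n2 * m1)"
    using assms(1,2) by (metis mult_pos_pos zero_less_mult_pos)
  then show ?thesis by (simp only: of_int_0_less_iff diff_gt_0_iff_gt)
qed

lemma int_step_below_slope:
  fixes u v :: real and m n m' n' :: int
  assumes "v > 0" "m > 0" and step: "u * of_int m = v * of_int n"
    and below: "v * of_int n' < u * of_int m'"
  shows "n' * m < n * m'"
proof -
  have "(v * of_int n' - u * of_int m') * of_int m < 0"
    using assms by (simp add: mult_neg_pos)
  also have "(v * of_int n' - u * of_int m') * of_int m
      = v * of_int n' * of_int m - (u * of_int m) * of_int m'"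
    by (simp add: algebra_simps)
  also have "\<dots> = v * of_int (n' * m - n * m')"
    unfolding step by (simp add: algebra_simps)
  finally have "real_of_int (n' * m - n * m') < 0"
    using assms(1) by (simp add: mult_less_0_iff del: of_int_diff of_int_mult)
  then show ?thesis by (simp only: of_int_less_0_iff diff_less_0_iff_less)
qed

text \<open>Take the last grid zero \<open>(k1, j1)\<close> of the steeper line and the first grid zero
  \<open>(k2, j2)\<close> of the other.  Sign agreement puts \<open>(k1, j1)\<close> weakly above and to the left of
  \<open>(k2, j2)\<close> and makes the grid point just below the zero \<open>(k1 - m1, j1 + n1)\<close> negative for both
  lines; the integer steps of the two lines cannot accommodate this.\<close>

lemma steeper_descending_line_impossible:
  assumes pos: "u1 > 0" "v1 > 0" "u2 > 0" "v2 > 0"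
    and same: "same_signs_on (grid N M) (aff u1 v1 w1) (aff u2 v2 w2)"
    and z1: "two_zeros_on (grid N M) (aff u1 v1 w1)"
    and z2: "two_zeros_on (grid N M) (aff u2 v2 w2)"
    and steeper: "u2 * v1 < u1 * v2"
  shows False
proof -
  obtain k1 j1 m1 n1 where t1: "(k1, j1) \<in> grid N M" "aff u1 v1 w1 (k1, j1) = 0"
    and step1: "m1 > 0" "n1 > 0" "u1 * of_int m1 = v1 * of_int n1"
    and in1: "(k1 - m1, j1 + n1) \<in> grid N M" and out1: "(k1 + m1, j1 - n1) \<notin> grid N M"
    using last_zero_of_descending_line[OF pos(1,2) z1] .
  obtain k2 j2 m2 n2 where t2: "(k2, j2) \<in> grid N M" "aff u2 v2 w2 (k2, j2) = 0"
    and step2: "m2 > 0" "n2 > 0" "u2 * of_int m2 = v2 * of_int n2"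
    and in2: "(k2 + m2, j2 - n2) \<in> grid N M" and out2: "(k2 - m2, j2 + n2) \<notin> grid N M"
    using first_zero_of_descending_line[OF pos(3,4) z2] .
  have sign: "0 \<le> aff u1 v1 w1 p \<longleftrightarrow> 0 \<le> aff u2 v2 w2 p" if "p \<in> grid N M" for p
    using same that by (simp add: same_signs_on_def)
  have "0 \<le> aff u1 v1 w1 (k2, j2)" and "0 \<le> aff u2 v2 w2 (k1, j1)"
    using sign[OF t1(1)] sign[OF t2(1)] t1(2) t2(2) by simp_all
  then have "v1 * of_int (j1 - j2) \<le> u1 * of_int (k2 - k1)"
    and "u2 * of_int (k2 - k1) \<le> v2 * of_int (j1 - j2)"
    using t1(2) t2(2) by (simp_all add: algebra_simps)
  from wedge_nonneg[OF pos steeper this]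
  have ord: "k1 \<le> k2" "j2 \<le> j1" by simp_all
  have steeper_steps: "n2 * m1 < n1 * m2"
    using pos(2,4) step1(1) step2(1) step1(3) step2(3) steeper by (rule int_steps_of_steeper_slope)
  have "(k1 - m1, j1 + n1 - 1) \<in> grid N M" using in1 t1(1) step1 by auto
  moreover have "aff u1 v1 w1 (k1 - m1, j1 + n1 - 1) < 0"
    using t1(2) step1(3) pos by (simp add: algebra_simps)
  ultimately have "aff u2 v2 w2 (k1 - m1, j1 + n1 - 1) < 0" using sign by (meson not_le)
  then have "v2 * of_int (n1 - 1) < u2 * of_int m1"
    using \<open>0 \<le> aff u2 v2 w2 (k1, j1)\<close> by (simp add: algebra_simps)
  then have below: "(n1 - 1) * m2 < n2 * m1"
    using pos(4) step2(1,3) by (intro int_step_below_slope)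
  show False
    using lattice_steps_contradiction[OF step1(1,2) step2(1,2) in1 out1 in2 out2 ord
        steeper_steps below] .
qed

lemma same_zeros_of_descending_lines:
  assumes pos: "u1 > 0" "v1 > 0" "u2 > 0" "v2 > 0"
    and same: "same_signs_on (grid N M) (aff u1 v1 w1) (aff u2 v2 w2)"
    and z1: "two_zeros_on (grid N M) (aff u1 v1 w1)"
    and z2: "two_zeros_on (grid N M) (aff u2 v2 w2)"
  shows "same_zeros_on (grid N M) (aff u1 v1 w1) (aff u2 v2 w2)"
proof -
  have "u1 * v2 = u2 * v1"
    using steeper_descending_line_impossible[OF pos same z1 z2]
      steeper_descending_line_impossible[OF pos(3,4,1,2) same_signs_on_sym[OF same] z2 z1]
    by argo
  define l where "l = v2 / v1"
  define \<mu> where "\<mu> = w2 - l * w1"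
  have "l > 0" using pos by (simp add: l_def)
  have "u2 = l * u1" "v2 = l * v1"
    using \<open>u1 * v2 = u2 * v1\<close> pos by (simp_all add: l_def field_simps)
  then have parallel: "aff u2 v2 w2 p = l * aff u1 v1 w1 p + \<mu>" for p
    by (simp add: aff_def \<mu>_def algebra_simps)
  have sign: "0 \<le> aff u1 v1 w1 p \<longleftrightarrow> 0 \<le> aff u2 v2 w2 p" if "p \<in> grid N M" for p
    using same that by (simp add: same_signs_on_def)
  obtain p1 p2 where p1: "p1 \<in> grid N M" "aff u1 v1 w1 p1 = 0"
    and p2: "p2 \<in> grid N M" "aff u2 v2 w2 p2 = 0"
    using z1 z2 by (auto simp: two_zeros_on_def)
  have "0 \<le> \<mu>" using sign[OF p1(1)] p1(2) parallel[of p1] by simp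
  moreover have "0 \<le> l * aff u1 v1 w1 p2" using sign[OF p2(1)] p2(2) \<open>l > 0\<close> by simp
  then have "\<mu> \<le> 0" using parallel[of p2] p2(2) by linarith
  ultimately have "\<mu> = 0" by linarith
  then show ?thesis
    using parallel \<open>l > 0\<close> by (simp add: same_zeros_on_def)
qed

lemma same_zeros_if_snd_slopes_positive:
  assumes "u1 * u2 > 0" "v1 > 0" "v2 > 0"
    and same: "same_signs_on (grid N M) (aff u1 v1 w1) (aff u2 v2 w2)"
    and z1: "two_zeros_on (grid N M) (aff u1 v1 w1)"
    and z2: "two_zeros_on (grid N M) (aff u2 v2 w2)"
  shows "same_zeros_on (grid N M) (aff u1 v1 w1) (aff u2 v2 w2)"
proof (cases "u1 > 0")
  case True
  then show ?thesis
    using assms same_zeros_of_descending_lines by (simp add: zero_less_mult_iff)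
next
  case False
  then have "- u1 > 0" "- u2 > 0" using assms(1) by (auto simp: zero_less_mult_iff)
  have "same_zeros_on (grid N M) (aff u1 v1 w1 \<circ> (\<lambda>(k, j). (N - k, j)))
      (aff u2 v2 w2 \<circ> (\<lambda>(k, j). (N - k, j)))"
    unfolding aff_comp_reflect_fst
    by (rule same_zeros_of_descending_lines[OF \<open>- u1 > 0\<close> \<open>v1 > 0\<close> \<open>- u2 > 0\<close> \<open>v2 > 0\<close>])
      (use same_signs_on_comp[OF reflect_fst_grid same] two_zeros_on_comp[OF reflect_fst_grid z1]
        two_zeros_on_comp[OF reflect_fst_grid z2] in \<open>simp_all add: aff_comp_reflect_fst\<close>)
  then show ?thesis by (simp add: same_zeros_on_comp_iff[OF reflect_fst_grid])
qed

lemma same_zeros_if_same_slope_signs: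
  assumes "u1 * u2 > 0" "v1 * v2 > 0"
    and same: "same_signs_on (grid N M) (aff u1 v1 w1) (aff u2 v2 w2)"
    and z1: "two_zeros_on (grid N M) (aff u1 v1 w1)"
    and z2: "two_zeros_on (grid N M) (aff u2 v2 w2)"
  shows "same_zeros_on (grid N M) (aff u1 v1 w1) (aff u2 v2 w2)"
proof (cases "v1 > 0")
  case True
  then show ?thesis
    using assms same_zeros_if_snd_slopes_positive by (simp add: zero_less_mult_iff)
next
  case False
  then have "- v1 > 0" "- v2 > 0" using assms(2) by (auto simp: zero_less_mult_iff)
  have "same_zeros_on (grid N M) (aff u1 v1 w1 \<circ> (\<lambda>(k, j). (k, M - j)))
      (aff u2 v2 w2 \<circ> (\<lambda>(k, j). (k, M - j)))"
    unfolding aff_comp_reflect_snd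
    by (rule same_zeros_if_snd_slopes_positive[OF assms(1) \<open>- v1 > 0\<close> \<open>- v2 > 0\<close>])
      (use same_signs_on_comp[OF reflect_snd_grid same] two_zeros_on_comp[OF reflect_snd_grid z1]
        two_zeros_on_comp[OF reflect_snd_grid z2] in \<open>simp_all add: aff_comp_reflect_snd\<close>)
  then show ?thesis by (simp add: same_zeros_on_comp_iff[OF reflect_snd_grid])
qed

definition row_boundary :: "real \<Rightarrow> real \<Rightarrow> int \<Rightarrow> bool" where
  "row_boundary b c j \<longleftrightarrow>
     0 \<le> b * of_int j + c \<and> (b * of_int (j - 1) + c < 0 \<or> b * of_int (j + 1) + c < 0)"

lemma row_boundary_unique:
  assumes "b \<noteq> 0" "row_boundary b c j" "row_boundary b c j'"
  shows "j = j'"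
proof -
  have "of_int j - of_int j' < (1::real)" "of_int j' - of_int j < (1::real)"
    using assms unfolding row_boundary_def
    by (smt (verit, best) mult_less_cancel_left of_int_add of_int_diff of_int_1)+
  then show ?thesis by linarith
qed

lemma zero_on_row_boundary:
  assumes same: "same_signs_on (grid N M) (aff u v w) (aff 0 b c)"
    and neg: "(k0, j0) \<in> grid N M" "aff 0 b c (k0, j0) < 0"
    and zero: "(k, j) \<in> grid N M" "aff u v w (k, j) = 0"
  shows "row_boundary b c j"
proof (rule ccontr)
  have sign: "0 \<le> aff u v w p \<longleftrightarrow> 0 \<le> aff 0 b c p" if "p \<in> grid N M" for p
    using same that by (simp add: same_signs_on_def)
  assume "\<not> row_boundary b c j"
  moreover have "0 \<le> b * of_int j + c" using sign[OF zero(1)] zero(2) by simp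
  ultimately have up: "0 \<le> b * of_int (j + 1) + c" and down: "0 \<le> b * of_int (j - 1) + c"
    by (auto simp: row_boundary_def)
  have "aff u v w (k, j0) < 0" using sign[of "(k, j0)"] neg zero(1) by auto
  then have "v * (of_int j0 - of_int j) < 0" using zero(2) by (simp add: algebra_simps)
  have "j0 \<noteq> j - 1" "j0 \<noteq> j" "j0 \<noteq> j + 1"
    using neg(2) up down \<open>0 \<le> b * of_int j + c\<close> by auto
  then consider "j0 < j - 1" | "j0 > j + 1" by linarith
  then show False
  proof cases
    case 1
    then have "0 \<le> aff u v w (k, j - 1)" using sign[of "(k, j - 1)"] neg(1) zero(1) down by simp
    then have "v \<le> 0" using zero(2) by (simp add: algebra_simps)
    then show False using \<open>v * (of_int j0 - of_int j) < 0\<close> 1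
      by (smt (verit) mult_nonpos_nonpos of_int_less_iff)
  next
    case 2
    then have "0 \<le> aff u v w (k, j + 1)" using sign[of "(k, j + 1)"] neg(1) zero(1) up by simp
    then have "0 \<le> v" using zero(2) by (simp add: algebra_simps)
    then show False using \<open>v * (of_int j0 - of_int j) < 0\<close> 2
      by (smt (verit) mult_nonneg_nonneg of_int_less_iff)
  qed
qed

lemma zeros_of_aff_in_one_row:
  assumes "two_zeros_on (grid N M) (aff u v w)"
    and row: "\<And>k j. (k, j) \<in> grid N M \<Longrightarrow> aff u v w (k, j) = 0 \<Longrightarrow> j = j0"
  shows "\<forall>p\<in>grid N M. aff u v w p = 0 \<longleftrightarrow> snd p = j0"
proof -
  obtain k1 k2 where z: "(k1, j0) \<in> grid N M" "(k2, j0) \<in> grid N M" "k1 \<noteq> k2"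
    "aff u v w (k1, j0) = 0" "aff u v w (k2, j0) = 0"
    using assms unfolding two_zeros_on_def by (metis prod.collapse)
  have "u * of_int k1 = u * of_int k2" using z(4,5) unfolding aff_apply by linarith
  then have "u = 0" using z(3) by simp
  then have eq: "aff u v w (k, j) = v * (of_int j - of_int j0)" for k j
    using z(4) by (simp add: algebra_simps)
  show ?thesis
  proof
    fix p assume "p \<in> grid N M"
    moreover obtain k j where "p = (k, j)" by fastforce
    ultimately show "aff u v w p = 0 \<longleftrightarrow> snd p = j0"
      using row[of k j] eq[of k j] by (cases "v = 0") auto
  qed
qed

lemma same_zeros_if_signs_of_row_function:
  assumes same1: "same_signs_on (grid N M) (aff u1 v1 w1) (aff 0 b c)"
    and same2: "same_signs_on (grid N M) (aff u2 v2 w2) (aff 0 b c)"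
    and z1: "two_zeros_on (grid N M) (aff u1 v1 w1)"
    and z2: "two_zeros_on (grid N M) (aff u2 v2 w2)"
    and neg: "\<exists>p\<in>grid N M. aff 0 b c p < 0"
  shows "same_zeros_on (grid N M) (aff u1 v1 w1) (aff u2 v2 w2)"
proof -
  obtain k0 j0 where neg0: "(k0, j0) \<in> grid N M" "aff 0 b c (k0, j0) < 0"
    using neg by auto
  obtain k1 j1 where zero1: "(k1, j1) \<in> grid N M" "aff u1 v1 w1 (k1, j1) = 0"
    using z1 unfolding two_zeros_on_def by (metis prod.collapse)
  have boundary: "row_boundary b c j1"
    by (rule zero_on_row_boundary[OF same1 neg0 zero1])
  have "b \<noteq> 0" using boundary neg0(2) by (auto simp: row_boundary_def)
  have "\<forall>p\<in>grid N M. aff u1 v1 w1 p = 0 \<longleftrightarrow> snd p = j1"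
    using zeros_of_aff_in_one_row[OF z1] zero_on_row_boundary[OF same1 neg0]
      row_boundary_unique[OF \<open>b \<noteq> 0\<close> _ boundary] by blast
  moreover have "\<forall>p\<in>grid N M. aff u2 v2 w2 p = 0 \<longleftrightarrow> snd p = j1"
    using zeros_of_aff_in_one_row[OF z2] zero_on_row_boundary[OF same2 neg0]
      row_boundary_unique[OF \<open>b \<noteq> 0\<close> _ boundary] by blast
  ultimately show ?thesis by (simp add: same_zeros_on_def)
qed

lemma convex_comb_zero:
  fixes x y :: real
  assumes "x * y \<le> 0"
  obtains t where "0 \<le> t" "t \<le> 1" "(1 - t) * x + t * y = 0"
proof (cases "x = y")
  case True
  then have "x = 0" using assms by (metis antisym mult_eq_0_iff zero_le_square)
  then show thesis using True that[of 0] by simp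
next
  case False
  have "0 \<le> x / (x - y) \<and> x / (x - y) \<le> 1"
    using assms False by (auto simp: divide_simps mult_le_0_iff)
  moreover have "(1 - x / (x - y)) * x + x / (x - y) * y = 0"
    using False by (simp add: field_simps)
  ultimately show thesis using that by blast
qed

lemma same_zeros_if_opposite_fst_slopes:
  assumes "u1 * u2 \<le> 0"
    and same: "same_signs_on (grid N M) (aff u1 v1 w1) (aff u2 v2 w2)"
    and z1: "two_zeros_on (grid N M) (aff u1 v1 w1)"
    and z2: "two_zeros_on (grid N M) (aff u2 v2 w2)"
    and neg: "\<exists>p\<in>grid N M. aff u1 v1 w1 p < 0"
  shows "same_zeros_on (grid N M) (aff u1 v1 w1) (aff u2 v2 w2)"
proof -
  obtain t where t: "0 \<le> t" "t \<le> 1" "(1 - t) * u1 + t * u2 = 0"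
    using convex_comb_zero[OF assms(1)] .
  define g where "g = aff 0 ((1 - t) * v1 + t * v2) ((1 - t) * w1 + t * w2)"
  have g: "g = (\<lambda>p. (1 - t) * aff u1 v1 w1 p + t * aff u2 v2 w2 p)"
  proof
    fix p
    have "(1 - t) * aff u1 v1 w1 p + t * aff u2 v2 w2 p
        = ((1 - t) * u1 + t * u2) * of_int (fst p) + g p"
      by (simp add: aff_def g_def algebra_simps)
    then show "g p = (1 - t) * aff u1 v1 w1 p + t * aff u2 v2 w2 p" using t(3) by simp
  qed
  have same1: "same_signs_on (grid N M) (aff u1 v1 w1) g"
    unfolding g by (rule same_signs_on_convex_comb[OF same t(1,2)])
  moreover have "same_signs_on (grid N M) (aff u2 v2 w2) g"
    by (rule same_signs_on_trans[OF same_signs_on_sym[OF same] same1])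
  moreover have "\<exists>p\<in>grid N M. g p < 0"
    using neg same1 by (auto simp: same_signs_on_def not_le[symmetric])
  ultimately show ?thesis
    using same_zeros_if_signs_of_row_function z1 z2 by (simp add: g_def)
qed

text \<open>If the first slopes have opposite signs, a convex combination of the two functions depends on
  the second coordinate only and has the same sign pattern; its sign change pins both zero sets to
  one row.  Otherwise reflections of the grid make both lines descending, and these must be
  parallel.\<close>

lemma same_zeros_if_same_signs:
  assumes same: "same_signs_on (grid N M) (aff u1 v1 w1) (aff u2 v2 w2)"
    and z1: "two_zeros_on (grid N M) (aff u1 v1 w1)"
    and z2: "two_zeros_on (grid N M) (aff u2 v2 w2)"
    and neg: "\<exists>p\<in>grid N M. aff u1 v1 w1 p < 0"
  shows "same_zeros_on (grid N M) (aff u1 v1 w1) (aff u2 v2 w2)"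
proof -
  consider "u1 * u2 \<le> 0" | "v1 * v2 \<le> 0" | "u1 * u2 > 0" "v1 * v2 > 0" by linarith
  then show ?thesis
  proof cases
    case 1
    then show ?thesis by (rule same_zeros_if_opposite_fst_slopes[OF _ same z1 z2 neg])
  next
    case 2
    from neg obtain k j where "(k, j) \<in> grid N M" "aff u1 v1 w1 (k, j) < 0" by auto
    then have neg': "\<exists>p\<in>grid M N. aff v1 u1 w1 p < 0"
      by (intro bexI[of _ "(j, k)"]) (auto simp: algebra_simps)
    have "same_zeros_on (grid M N) (aff u1 v1 w1 \<circ> prod.swap) (aff u2 v2 w2 \<circ> prod.swap)"
      unfolding aff_comp_swap
      by (rule same_zeros_if_opposite_fst_slopes[OF 2])
        (use same_signs_on_comp[OF swap_grid same] two_zeros_on_comp[OF swap_grid z1]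
          two_zeros_on_comp[OF swap_grid z2] neg' in \<open>auto simp: aff_comp_swap\<close>)
    then show ?thesis by (simp add: same_zeros_on_comp_iff[OF swap_grid])
  next
    case 3
    then show ?thesis by (rule same_zeros_if_same_slope_signs[OF _ _ same z1 z2])
  qed
qed

lemma nonpos_aff_zero_at_edge:
  assumes nonpos: "\<forall>q\<in>grid N M. aff u v w q \<le> 0"
    and "(k, j) \<in> grid N M" "aff u v w (k, j) = 0"
  shows "(u > 0 \<longrightarrow> k = N) \<and> (u < 0 \<longrightarrow> k = 0) \<and> (v > 0 \<longrightarrow> j = M) \<and> (v < 0 \<longrightarrow> j = 0)"
proof -
  have step: "aff u v w (k + 1, j) = u" "aff u v w (k - 1, j) = - u"
    "aff u v w (k, j + 1) = v" "aff u v w (k, j - 1) = - v"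
    using assms(3) by (simp_all add: algebra_simps)
  have "k = N" if "u > 0"
    using nonpos[rule_format, of "(k + 1, j)"] assms(2) that step(1) by (cases "k = N") auto
  moreover have "k = 0" if "u < 0"
    using nonpos[rule_format, of "(k - 1, j)"] assms(2) that step(2) by (cases "k = 0") auto
  moreover have "j = M" if "v > 0"
    using nonpos[rule_format, of "(k, j + 1)"] assms(2) that step(3) by (cases "j = M") auto
  moreover have "j = 0" if "v < 0"
    using nonpos[rule_format, of "(k, j - 1)"] assms(2) that step(4) by (cases "j = 0") auto
  ultimately show ?thesis by blast
qed

section \<open>Plane geometry\<close>

definition det2 :: "real \<times> real \<Rightarrow> real \<times> real \<Rightarrow> real" where
  "det2 X Y = fst X * snd Y - snd X * fst Y"

lemma det2_swap: "det2 Y X = - det2 X Y"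
  by (simp add: det2_def)

lemma det2_eq_0_imp_scaleR:
  assumes "A \<noteq> 0" "det2 A B = 0"
  obtains t where "B = t *\<^sub>R A"
proof (cases "fst A = 0")
  case False
  then have "B = (fst B / fst A) *\<^sub>R A"
    using assms(2) by (simp add: det2_def prod_eq_iff field_simps)
  then show thesis by (rule that)
next
  case True
  then have "snd A \<noteq> 0" using assms(1) by (simp add: prod_eq_iff)
  then have "B = (snd B / snd A) *\<^sub>R A"
    using True assms(2) by (simp add: det2_def prod_eq_iff)
  then show thesis by (rule that)
qed

lemma orthogonal_eq_det2_multiple:
  assumes "n \<noteq> 0" "X \<noteq> 0" "inner n X = 0"
  obtains l where "l \<noteq> 0" "\<And>Y. inner n Y = l * det2 X Y"
proof (cases "fst X = 0")
  case False
  define l where "l = snd n / fst X"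
  have "fst n = - l * snd X"
    using assms(3) False by (simp add: l_def inner_prod_def field_simps)
  moreover have "snd n = l * fst X" using False by (simp add: l_def)
  ultimately have "inner n Y = l * det2 X Y" for Y
    by (simp add: inner_prod_def det2_def algebra_simps)
  moreover have "l \<noteq> 0" using assms(1) \<open>fst n = - l * snd X\<close> \<open>snd n = l * fst X\<close>
    by (auto simp: prod_eq_iff)
  ultimately show thesis using that by blast
next
  case True
  then have "snd X \<noteq> 0" using assms(2) by (simp add: prod_eq_iff)
  then have "snd n = 0" using assms(3) True by (simp add: inner_prod_def)
  define l where "l = - fst n / snd X"
  have "inner n Y = l * det2 X Y" for Y
    using True \<open>snd n = 0\<close> \<open>snd X \<noteq> 0\<close> by (simp add: l_def inner_prod_def det2_def)
  moreover have "l \<noteq> 0" using assms(1) \<open>snd n = 0\<close> \<open>snd X \<noteq> 0\<close>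
    by (auto simp: l_def prod_eq_iff)
  ultimately show thesis using that by blast
qed

lemma two_lines_meet_at_most_once:
  fixes A B X Y :: "real \<times> real"
  assumes "A \<noteq> B" "inner A X = 1" "inner B X = 1" "inner A Y = 1" "inner B Y = 1"
  shows "X = Y"
proof (rule ccontr)
  assume "X \<noteq> Y"
  have "A \<noteq> 0" "B \<noteq> 0" using assms(2,3) by auto
  moreover have "inner A (X - Y) = 0" "inner B (X - Y) = 0"
    using assms(2-5) by (simp_all add: inner_diff_right)
  ultimately obtain lA lB where lA: "\<And>Z. inner A Z = lA * det2 (X - Y) Z"
    and lB: "\<And>Z. inner B Z = lB * det2 (X - Y) Z"
    using orthogonal_eq_det2_multiple \<open>X \<noteq> Y\<close> by (metis right_minus_eq)
  have "lA * det2 (X - Y) X = lB * det2 (X - Y) X" "det2 (X - Y) X \<noteq> 0"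
    using assms(2,3) lA[of X] lB[of X] by auto
  then have "\<forall>Z. inner A Z = inner B Z" using lA lB by simp
  then show False using assms(1) vector_eq_rdot by blast
qed

lemma exists_orthogonal_nonzero:
  fixes P :: "real \<times> real"
  obtains d where "d \<noteq> 0" "inner P d = 0"
proof (cases "P = 0")
  case True
  then show thesis using that[of "(1, 0)"] by (simp add: zero_prod_def)
next
  case False
  then show thesis using that[of "(- snd P, fst P)"] by (auto simp: inner_prod_def prod_eq_iff)
qed

lemma opposite_signs:
  fixes l1 l2 d :: real
  assumes "0 \<le> l1 * d" "0 \<le> l2 * - d" "d \<noteq> 0" "l1 \<noteq> 0" "l2 \<noteq> 0"
  shows "l1 * l2 < 0"
  using assms by (cases "d > 0") (auto simp: zero_le_mult_iff mult_le_0_iff mult_less_0_iff)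

lemma ex_subset_singleton: "(\<And>x y. x \<in> A \<Longrightarrow> y \<in> A \<Longrightarrow> x = y) \<Longrightarrow> \<exists>z. A \<subseteq> {z}"
  by (metis subsetI singleton_iff)

lemma ex_subset_doubleton:
  "(\<And>x y z. x \<in> A \<Longrightarrow> y \<in> A \<Longrightarrow> z \<in> A \<Longrightarrow> x = y \<or> y = z \<or> x = z) \<Longrightarrow> \<exists>y z. A \<subseteq> {y, z}"
  by (metis empty_subsetI insert_subset subsetI singletonD insertE insertCI)

section \<open>The cell of a lattice line pattern\<close>

locale rect_lattice =
  fixes a b dx dy :: real and N M :: nat
  assumes dx_pos: "dx > 0" and dy_pos: "dy > 0"
begin

abbreviation idx :: "(int \<times> int) set" where
  "idx \<equiv> grid (int N) (int M)"

definition pt :: "int \<times> int \<Rightarrow> real \<times> real" where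
  "pt p = (a + of_int (fst p) * dx, b + of_int (snd p) * dy)"

definition line_val :: "real \<times> real \<Rightarrow> int \<times> int \<Rightarrow> real" where
  "line_val X p = inner (pt p) X - 1"

lemma pt_inj: "pt p = pt q \<Longrightarrow> p = q"
  using dx_pos dy_pos by (cases p, cases q) (auto simp: pt_def)

lemma line_val_eq_aff: "line_val X = aff (dx * fst X) (dy * snd X) (a * fst X + b * snd X - 1)"
  by (auto simp: fun_eq_iff line_val_def pt_def aff_def inner_prod_def algebra_simps)

lemma line_val_apply:
  "line_val X (k, j) = (a + of_int k * dx) * fst X + (b + of_int j * dy) * snd X - 1"
  by (simp add: line_val_def pt_def inner_prod_def)

lemma scaled_line_val_eq_aff:
  "(\<lambda>p. c * line_val X p) = aff (c * (dx * fst X)) (c * (dy * snd X)) (c * (a * fst X + b * snd X - 1))"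
  by (simp add: line_val_eq_aff aff_def fun_eq_iff algebra_simps)

lemma line_val_zero [simp]: "line_val 0 p = -1"
  by (simp add: line_val_def)

lemma line_val_scaleR: "line_val (t *\<^sub>R X) p = t * (line_val X p + 1) - 1"
  by (simp add: line_val_def)

lemma line_val_add_scaleR: "line_val (X + t *\<^sub>R d) p = line_val X p + t * inner (pt p) d"
  by (simp add: line_val_def inner_add_right algebra_simps)

lemma line_val_affine_comb:
  "u + v = 1 \<Longrightarrow> line_val (u *\<^sub>R X + v *\<^sub>R Y) p = u * line_val X p + v * line_val Y p"
  by (simp add: line_val_def inner_add_right algebra_simps flip: distrib_left)

lemma halfplane_line_val_gt: "{X. 0 < c * line_val X p} = {X. c < inner (c *\<^sub>R pt p) X}"
  by (auto simp: line_val_def algebra_simps)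

lemma rect_lattice_set_eq: "rect_lattice_set a b dx dy N M = pt ` idx - {0}"
proof -
  have "{(a + real k * dx, b + real j * dy) |k j. k \<le> N \<and> j \<le> M} = pt ` idx"
  proof (intro set_eqI iffI)
    fix P assume "P \<in> {(a + real k * dx, b + real j * dy) |k j. k \<le> N \<and> j \<le> M}"
    then obtain k j where "P = pt (int k, int j)" "k \<le> N" "j \<le> M" by (auto simp: pt_def)
    then show "P \<in> pt ` idx" by force
  next
    fix P assume "P \<in> pt ` idx"
    then obtain k j where "P = pt (k, j)" "0 \<le> k" "k \<le> int N" "0 \<le> j" "j \<le> int M" by auto
    then show "P \<in> {(a + real k * dx, b + real j * dy) |k j. k \<le> N \<and> j \<le> M}"
      by (intro CollectI exI[of _ "nat k"] exI[of _ "nat j"]) (auto simp: pt_def)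
  qed
  then show ?thesis by (simp add: rect_lattice_set_def zero_prod_def)
qed

lemma lines_complement:
  "UNIV - \<Union>(line_of ` rect_lattice_set a b dx dy N M) = {X. \<forall>p\<in>idx. line_val X p \<noteq> 0}"
proof -
  have "X \<in> line_of P \<longleftrightarrow> inner P X = 1" for X P
    by (cases X) (simp add: line_of_def inner_prod_def)
  then have "X \<in> line_of (pt p) \<longleftrightarrow> line_val X p = 0" for X p
    by (simp add: line_val_def)
  moreover have "line_of 0 = {}" by (auto simp: line_of_def zero_prod_def)
  then have "\<Union>(line_of ` (pt ` idx - {0})) = (\<Union>p\<in>idx. line_of (pt p))" by auto
  ultimately show ?thesis by (auto simp: rect_lattice_set_eq)
qed

end

locale lattice_cell = rect_lattice +
  fixes X0 :: "real \<times> real"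
  assumes X0_off_lines: "\<forall>p\<in>idx. line_val X0 p \<noteq> 0"
begin

definition cell :: "(real \<times> real) set" where
  "cell = {X. \<forall>p\<in>idx. 0 \<le> sgn (line_val X0 p) * line_val X p}"

definition open_cell :: "(real \<times> real) set" where
  "open_cell = {X. \<forall>p\<in>idx. 0 < sgn (line_val X0 p) * line_val X p}"

text \<open>Since \<open>line_val 0 p = -1\<close>, the far lines are those separating \<open>X0\<close> from the origin.\<close>

definition far :: "(int \<times> int) set" where
  "far = {p \<in> idx. line_val X0 p > 0}"

definition near :: "(int \<times> int) set" where
  "near = {p \<in> idx. line_val X0 p < 0}"

lemma far_near_cases: "p \<in> idx \<Longrightarrow> p \<in> far \<or> p \<in> near"
  using X0_off_lines by (auto simp: far_def near_def neq_iff)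

lemma far_near_disjoint: "p \<in> far \<Longrightarrow> p \<notin> near"
  by (auto simp: far_def near_def)

lemma far_subset: "far \<subseteq> idx" and near_subset: "near \<subseteq> idx"
  by (auto simp: far_def near_def)

lemma cell_far: "X \<in> cell \<Longrightarrow> p \<in> far \<Longrightarrow> 0 \<le> line_val X p"
  by (auto simp: cell_def far_def zero_le_mult_iff)

lemma cell_near: "X \<in> cell \<Longrightarrow> p \<in> near \<Longrightarrow> line_val X p \<le> 0"
  by (auto simp: cell_def near_def zero_le_mult_iff)

lemma X0_in_open_cell: "X0 \<in> open_cell"
  using X0_off_lines by (auto simp: open_cell_def sgn_if zero_less_mult_iff)

lemma cell_eq_halfplanes:
  "cell = (\<Inter>p\<in>idx. {X. sgn (line_val X0 p) \<le> inner (sgn (line_val X0 p) *\<^sub>R pt p) X})"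
  by (auto simp: cell_def line_val_def algebra_simps)

lemma open_cell_eq_halfplanes:
  "open_cell = (\<Inter>p\<in>idx. {X. sgn (line_val X0 p) < inner (sgn (line_val X0 p) *\<^sub>R pt p) X})"
  by (auto simp: open_cell_def line_val_def algebra_simps)

lemma closed_cell: "closed cell"
  unfolding cell_eq_halfplanes by (intro closed_INT ballI closed_halfspace_ge)

lemma convex_cell: "convex cell"
  unfolding cell_eq_halfplanes by (intro convex_INT ballI convex_halfspace_ge)

lemma convex_open_cell: "convex open_cell"
  unfolding open_cell_eq_halfplanes by (intro convex_INT ballI convex_halfspace_gt)

lemma open_segment_subset_open_cell:
  assumes "Y \<in> cell"
  shows "open_segment Y X0 \<subseteq> open_cell"
proof
  fix X assume "X \<in> open_segment Y X0"
  then obtain t where t: "0 < t" "t < 1" and X: "X = (1 - t) *\<^sub>R Y + t *\<^sub>R X0"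
    by (auto simp: in_segment)
  show "X \<in> open_cell" unfolding open_cell_def
  proof (intro CollectI ballI)
    fix p assume p: "p \<in> idx"
    define s where "s = sgn (line_val X0 p)"
    have "0 \<le> s * line_val Y p" using assms p by (simp add: cell_def s_def)
    moreover have "0 < s * line_val X0 p" using X0_in_open_cell p by (simp add: open_cell_def s_def)
    moreover have "s * line_val X p = s * ((1 - t) * line_val Y p + t * line_val X0 p)"
      unfolding X by (subst line_val_affine_comb) simp_all
    then have "s * line_val X p = (1 - t) * (s * line_val Y p) + t * (s * line_val X0 p)"
      by (simp add: algebra_simps)
    ultimately show "0 < sgn (line_val X0 p) * line_val X p"
      using t by (simp add: s_def add_nonneg_pos)
  qed
qed

lemma cell_subset_closure_open_cell: "cell \<subseteq> closure open_cell"
proof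
  fix Y assume Y: "Y \<in> cell"
  show "Y \<in> closure open_cell"
  proof (cases "Y = X0")
    case True
    then show ?thesis using X0_in_open_cell closure_subset by blast
  next
    case False
    then have "Y \<in> closure (open_segment Y X0)" by (simp add: closure_open_segment)
    then show ?thesis using closure_mono[OF open_segment_subset_open_cell[OF Y]] by blast
  qed
qed

lemma component_subset_cell:
  assumes C: "C \<in> components {X. \<forall>p\<in>idx. line_val X p \<noteq> 0}" and "X0 \<in> C"
  shows "C \<subseteq> cell"
proof
  fix W assume "W \<in> C"
  show "W \<in> cell" unfolding cell_def
  proof (intro CollectI ballI)
    fix p assume "p \<in> idx"
    then have "\<forall>z\<in>C. inner (pt p) z \<noteq> 1"
      using in_components_subset[OF C] by (auto simp: line_val_def)
    then have "\<not> (inner (pt p) W \<le> 1 \<and> 1 \<le> inner (pt p) X0)"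
      and "\<not> (inner (pt p) X0 \<le> 1 \<and> 1 \<le> inner (pt p) W)"
      using connected_ivt_hyperplane[OF in_components_connected[OF C] \<open>W \<in> C\<close> \<open>X0 \<in> C\<close>]
        connected_ivt_hyperplane[OF in_components_connected[OF C] \<open>X0 \<in> C\<close> \<open>W \<in> C\<close>]
      by blast+
    then have "line_val W p > 0 \<longleftrightarrow> line_val X0 p > 0" "line_val W p < 0 \<longleftrightarrow> line_val X0 p < 0"
      unfolding line_val_def by linarith+
    then show "0 \<le> sgn (line_val X0 p) * line_val W p"
      by (cases "line_val X0 p" rule: linorder_cases) (auto simp: zero_le_mult_iff)
  qed
qed

lemma open_cell_subset_component:
  assumes C: "C \<in> components {X. \<forall>p\<in>idx. line_val X p \<noteq> 0}" and "X0 \<in> C"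
  shows "open_cell \<subseteq> C"
proof -
  obtain x where "C = connected_component_set {X. \<forall>p\<in>idx. line_val X p \<noteq> 0} x"
    using C components_iff by blast
  then have "C = connected_component_set {X. \<forall>p\<in>idx. line_val X p \<noteq> 0} X0"
    using \<open>X0 \<in> C\<close> connected_component_eq by blast
  moreover have "open_cell \<subseteq> {X. \<forall>p\<in>idx. line_val X p \<noteq> 0}"
  proof (intro subsetI CollectI ballI)
    fix X p assume "X \<in> open_cell" "p \<in> idx"
    then have "0 < sgn (line_val X0 p) * line_val X p" by (simp add: open_cell_def)
    then show "line_val X p \<noteq> 0" by auto
  qed
  ultimately show ?thesis
    using connected_component_maximal[OF X0_in_open_cell convex_connected[OF convex_open_cell]]
    by blast
qed

lemma closure_component_eq_cell:
  assumes "C \<in> components {X. \<forall>p\<in>idx. line_val X p \<noteq> 0}" and "X0 \<in> C"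
  shows "closure C = cell"
proof
  show "closure C \<subseteq> cell"
    by (rule closure_minimal[OF component_subset_cell[OF assms] closed_cell])
  show "cell \<subseteq> closure C"
    using cell_subset_closure_open_cell closure_mono[OF open_cell_subset_component[OF assms]]
    by blast
qed

section \<open>Vertices of a bounded cell\<close>

lemma strict_constraints_persist:
  assumes "X \<in> cell"
  obtains e where "e > 0"
    "\<And>Y p. Y \<in> ball X e \<Longrightarrow> p \<in> idx \<Longrightarrow> line_val X p \<noteq> 0 \<Longrightarrow>
      0 < sgn (line_val X0 p) * line_val Y p"
proof -
  define V where "V = (\<Inter>p\<in>{p \<in> idx. line_val X p \<noteq> 0}. {Y. 0 < sgn (line_val X0 p) * line_val Y p})"
  have "open V"
    unfolding V_def halfplane_line_val_gt by (intro open_INT ballI open_halfspace_gt) simp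
  moreover have "0 < sgn (line_val X0 p) * line_val X p" if "p \<in> idx" "line_val X p \<noteq> 0" for p
  proof -
    have "0 \<le> sgn (line_val X0 p) * line_val X p" using assms that(1) by (simp add: cell_def)
    moreover have "sgn (line_val X0 p) \<noteq> 0" using X0_off_lines that(1) sgn_0_0 by blast
    ultimately show ?thesis using that(2) by (simp add: less_le)
  qed
  then have "X \<in> V" by (simp add: V_def)
  ultimately obtain e where "e > 0" "ball X e \<subseteq> V" by (meson open_contains_ball)
  then show thesis using that unfolding V_def by blast
qed

lemma cell_perturbation:
  assumes "X \<in> cell" and tight: "\<And>p. p \<in> idx \<Longrightarrow> line_val X p = 0 \<Longrightarrow> inner (pt p) d = 0"
  obtains s where "s > 0" "X + s *\<^sub>R d \<in> cell" "X - s *\<^sub>R d \<in> cell"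
proof -
  obtain e where "e > 0" and strict: "\<And>Y p. Y \<in> ball X e \<Longrightarrow> p \<in> idx \<Longrightarrow> line_val X p \<noteq> 0 \<Longrightarrow>
      0 < sgn (line_val X0 p) * line_val Y p"
    using strict_constraints_persist[OF assms(1)] by blast
  define s where "s = e / (2 * norm d + 1)"
  have "s > 0" using \<open>e > 0\<close> by (simp add: s_def add_nonneg_pos)
  have in_cell: "X + t *\<^sub>R d \<in> cell" if "\<bar>t\<bar> \<le> s" for t
    unfolding cell_def
  proof (intro CollectI ballI)
    fix p assume "p \<in> idx"
    have "norm (t *\<^sub>R d) \<le> s * norm d" using that by (simp add: mult_right_mono)
    also have "\<dots> = e * (norm d / (2 * norm d + 1))" by (simp add: s_def)
    also have "\<dots> < e" using \<open>e > 0\<close> by (simp add: divide_less_eq add_nonneg_pos)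
    finally have "X + t *\<^sub>R d \<in> ball X e" by (simp add: dist_norm)
    then show "0 \<le> sgn (line_val X0 p) * line_val (X + t *\<^sub>R d) p"
      using strict[of "X + t *\<^sub>R d" p] \<open>p \<in> idx\<close> tight[OF \<open>p \<in> idx\<close>]
      by (cases "line_val X p = 0") (simp_all add: line_val_add_scaleR less_imp_le)
  qed
  show thesis
    using that[OF \<open>s > 0\<close>] in_cell[of s] in_cell[of "- s"] \<open>s > 0\<close> by simp
qed

lemma extreme_point_on_two_lines:
  assumes ext: "X extreme_point_of cell"
  shows "\<exists>p\<in>idx. \<exists>q\<in>idx. p \<noteq> q \<and> line_val X p = 0 \<and> line_val X q = 0"
proof -
  have "X \<in> cell" using ext by (simp add: extreme_point_of_def)
  show ?thesis
  proof (rule ccontr)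
    assume "\<not> ?thesis"
    then have single: "p = q" if "p \<in> idx" "q \<in> idx" "line_val X p = 0" "line_val X q = 0" for p q
      using that by blast
    obtain d where "d \<noteq> 0" and tight: "\<And>p. p \<in> idx \<Longrightarrow> line_val X p = 0 \<Longrightarrow> inner (pt p) d = 0"
    proof (cases "\<exists>p\<in>idx. line_val X p = 0")
      case True
      then obtain p0 where "p0 \<in> idx" "line_val X p0 = 0" by blast
      moreover obtain d where "d \<noteq> 0" "inner (pt p0) d = 0" by (rule exists_orthogonal_nonzero)
      ultimately show thesis using that single by metis
    next
      case False
      then show thesis using that[of "(1, 0)"] by (auto simp: zero_prod_def)
    qed
    obtain s where "s > 0" "X + s *\<^sub>R d \<in> cell" "X - s *\<^sub>R d \<in> cell"
      using cell_perturbation[OF \<open>X \<in> cell\<close> tight] by blast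
    moreover have "X = midpoint (X + s *\<^sub>R d) (X - s *\<^sub>R d)"
      by (simp add: midpoint_def algebra_simps flip: scaleR_2)
    moreover have "X + s *\<^sub>R d \<noteq> X - s *\<^sub>R d"
    proof
      assume "X + s *\<^sub>R d = X - s *\<^sub>R d"
      then have "(2 * s) *\<^sub>R d = 0" by (simp add: eq_neg_iff_add_eq_0 flip: scaleR_2)
      then show False using \<open>s > 0\<close> \<open>d \<noteq> 0\<close> by simp
    qed
    ultimately show False using ext unfolding extreme_point_of_def
      by (metis midpoint_in_open_segment)
  qed
qed

lemma extreme_point_eq_if_same_zeros:
  assumes "X1 extreme_point_of cell"
    and zeros: "\<And>p. p \<in> idx \<Longrightarrow> line_val X1 p = 0 \<longleftrightarrow> line_val X2 p = 0"
  shows "X1 = X2"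
proof -
  obtain p q where "p \<in> idx" "q \<in> idx" "p \<noteq> q" "line_val X1 p = 0" "line_val X1 q = 0"
    using extreme_point_on_two_lines[OF assms(1)] by blast
  moreover from this have "line_val X2 p = 0" "line_val X2 q = 0" using zeros by auto
  moreover have "pt p \<noteq> pt q" using \<open>p \<noteq> q\<close> pt_inj by blast
  ultimately show ?thesis
    using two_lines_meet_at_most_once[of "pt p" "pt q" X1 X2] by (simp add: line_val_def)
qed

lemma extreme_points_eq_if_same_signs:
  assumes ext: "X1 extreme_point_of cell" "X2 extreme_point_of cell" and "c \<noteq> 0"
    and same: "same_signs_on idx (\<lambda>p. c * line_val X1 p) (\<lambda>p. c * line_val X2 p)"
    and neg: "\<exists>p\<in>idx. c * line_val X1 p < 0"
  shows "X1 = X2"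
proof -
  have zeros: "two_zeros_on idx (\<lambda>p. c * line_val X p)" if X: "X extreme_point_of cell" for X
  proof -
    obtain p q where "p \<in> idx" "q \<in> idx" "p \<noteq> q" "line_val X p = 0" "line_val X q = 0"
      using extreme_point_on_two_lines[OF X] by blast
    then show ?thesis unfolding two_zeros_on_def by force
  qed
  obtain u1 v1 w1 u2 v2 w2 where
    aff1: "aff u1 v1 w1 = (\<lambda>p. c * line_val X1 p)" and aff2: "aff u2 v2 w2 = (\<lambda>p. c * line_val X2 p)"
    by (metis scaled_line_val_eq_aff)
  have "same_zeros_on idx (aff u1 v1 w1) (aff u2 v2 w2)"
    by (rule same_zeros_if_same_signs) (use same neg zeros[OF ext(1)] zeros[OF ext(2)] in \<open>simp_all add: aff1 aff2\<close>)
  then show ?thesis unfolding aff1 aff2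
    using extreme_point_eq_if_same_zeros[OF ext(1)] \<open>c \<noteq> 0\<close> by (simp add: same_zeros_on_def)
qed

definition pure_far :: "real \<times> real \<Rightarrow> bool" where
  "pure_far X \<longleftrightarrow> (\<forall>p\<in>idx. line_val X p = 0 \<longrightarrow> p \<in> far)"

definition pure_near :: "real \<times> real \<Rightarrow> bool" where
  "pure_near X \<longleftrightarrow> (\<forall>p\<in>idx. line_val X p = 0 \<longrightarrow> p \<in> near)"

definition mixed :: "real \<times> real \<Rightarrow> bool" where
  "mixed X \<longleftrightarrow> (\<exists>p\<in>far. \<exists>q\<in>near. line_val X p = 0 \<and> line_val X q = 0)"

lemma pure_far_or_pure_near_or_mixed: "pure_far X \<or> pure_near X \<or> mixed X"
  using far_near_cases by (auto simp: pure_far_def pure_near_def mixed_def)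

lemma pure_far_sign:
  assumes "X \<in> cell" "pure_far X" "p \<in> idx"
  shows "0 \<le> line_val X p \<longleftrightarrow> p \<in> far"
proof
  assume "0 \<le> line_val X p"
  show "p \<in> far"
  proof (rule ccontr)
    assume "p \<notin> far"
    then have "line_val X p \<le> 0" using cell_near[OF assms(1)] far_near_cases[OF assms(3)] by blast
    then show False using \<open>0 \<le> line_val X p\<close> \<open>p \<notin> far\<close> assms(2,3) by (simp add: pure_far_def)
  qed
qed (rule cell_far[OF assms(1)])

lemma pure_near_sign:
  assumes "X \<in> cell" "pure_near X" "p \<in> idx"
  shows "0 \<le> - line_val X p \<longleftrightarrow> p \<in> near"
proof
  assume "0 \<le> - line_val X p"
  show "p \<in> near"
  proof (rule ccontr)
    assume "p \<notin> near"
    then have "0 \<le> line_val X p" using cell_far[OF assms(1)] far_near_cases[OF assms(3)] by blast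
    then show False using \<open>0 \<le> - line_val X p\<close> \<open>p \<notin> near\<close> assms(2,3) by (simp add: pure_near_def)
  qed
qed (use cell_near[OF assms(1)] in simp)

lemma pure_far_unique:
  assumes "near \<noteq> {}" and ext: "X1 extreme_point_of cell" "X2 extreme_point_of cell"
    and "pure_far X1" "pure_far X2"
  shows "X1 = X2"
proof (rule extreme_points_eq_if_same_signs[OF ext one_neq_zero])
  have "X1 \<in> cell" "X2 \<in> cell" using ext by (simp_all add: extreme_point_of_def)
  then show "same_signs_on idx (\<lambda>p. 1 * line_val X1 p) (\<lambda>p. 1 * line_val X2 p)"
    using pure_far_sign assms(4,5) by (simp add: same_signs_on_def)
  obtain q where "q \<in> near" using assms(1) by blast
  then show "\<exists>p\<in>idx. 1 * line_val X1 p < 0"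
    using pure_far_sign[OF \<open>X1 \<in> cell\<close> assms(4)] near_subset far_near_disjoint
    by (metis not_le mult_1 subsetD)
qed

lemma pure_near_unique:
  assumes "far \<noteq> {}" and ext: "X1 extreme_point_of cell" "X2 extreme_point_of cell"
    and "pure_near X1" "pure_near X2"
  shows "X1 = X2"
proof (rule extreme_points_eq_if_same_signs[of X1 X2 "- 1"])
  have "X1 \<in> cell" "X2 \<in> cell" using ext by (simp_all add: extreme_point_of_def)
  then show "same_signs_on idx (\<lambda>p. - 1 * line_val X1 p) (\<lambda>p. - 1 * line_val X2 p)"
    using pure_near_sign assms(4,5) by (simp add: same_signs_on_def)
  obtain q where "q \<in> far" using assms(1) by blast
  then show "\<exists>p\<in>idx. - 1 * line_val X1 p < 0"
    using pure_near_sign[OF \<open>X1 \<in> cell\<close> assms(4)] far_subset far_near_disjoint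
    by (metis not_le mult_minus1 subsetD)
qed (use ext in auto)

lemma cell_nonzero: "far \<noteq> {} \<Longrightarrow> X \<in> cell \<Longrightarrow> X \<noteq> 0"
  using cell_far by fastforce

lemma near_nonempty:
  assumes "bounded cell" "far \<noteq> {}"
  shows "near \<noteq> {}"
proof
  assume "near = {}"
  then have all_far: "p \<in> far" if "p \<in> idx" for p using far_near_cases that by blast
  have ray: "t *\<^sub>R X0 \<in> cell" if "t \<ge> 1" for t
    unfolding cell_def
  proof (intro CollectI ballI)
    fix p assume "p \<in> idx"
    then have "line_val X0 p > 0" using all_far by (simp add: far_def)
    moreover from this have "1 * (line_val X0 p + 1) \<le> t * (line_val X0 p + 1)"
      using that by (intro mult_right_mono) auto
    ultimately have "0 \<le> line_val (t *\<^sub>R X0) p" unfolding line_val_scaleR by (simp only: mult_1)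
    then show "0 \<le> sgn (line_val X0 p) * line_val (t *\<^sub>R X0) p"
      using \<open>line_val X0 p > 0\<close> by simp
  qed
  obtain B where "\<forall>Y\<in>cell. norm Y \<le> B" using assms(1) by (auto simp: bounded_iff)
  moreover have "X0 \<noteq> 0" using cell_nonzero[OF assms(2)] ray[of 1] by simp
  then have "norm (((\<bar>B\<bar> + 1) / norm X0 + 1) *\<^sub>R X0) = \<bar>B\<bar> + 1 + norm X0"
    by (simp add: field_simps)
  then have "norm (((\<bar>B\<bar> + 1) / norm X0 + 1) *\<^sub>R X0) > B" using norm_ge_zero[of X0] by linarith
  ultimately show False using ray[of "(\<bar>B\<bar> + 1) / norm X0 + 1"] by fastforce
qed

text \<open>All lines of the lattice row \<open>j = 0\<close> pass through \<open>(0, 1 / b)\<close>, and similarly for the other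
  three edges of the lattice.\<close>

lemma extreme_point_without_far_lines:
  assumes "far = {}" and ext: "X extreme_point_of cell"
  shows "X \<in> {(0, 1 / b), (0, 1 / (b + real M * dy)), (1 / a, 0), (1 / (a + real N * dx), 0)}"
proof -
  define u v w where "u = dx * fst X" and "v = dy * snd X" and "w = a * fst X + b * snd X - 1"
  have aff_eq: "line_val X = aff u v w" by (simp add: line_val_eq_aff u_def v_def w_def)
  have "X \<in> cell" using ext by (simp add: extreme_point_of_def)
  have nonpos: "\<forall>q\<in>idx. aff u v w q \<le> 0"
  proof
    fix q assume "q \<in> idx"
    then have "q \<in> near" using assms(1) far_near_cases by blast
    then show "aff u v w q \<le> 0" using cell_near[OF \<open>X \<in> cell\<close>] by (simp add: aff_eq)
  qed
  obtain p q where pq: "p \<in> idx" "q \<in> idx" "p \<noteq> q" "line_val X p = 0" "line_val X q = 0"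
    using extreme_point_on_two_lines[OF ext] by blast
  obtain kp jp kq jq where "p = (kp, jp)" "q = (kq, jq)" by fastforce
  with pq have zeros: "(kp, jp) \<in> idx" "(kq, jq) \<in> idx" "(kp, jp) \<noteq> (kq, jq)"
    "line_val X (kp, jp) = 0" "line_val X (kq, jq) = 0" by simp_all
  note edge_p = nonpos_aff_zero_at_edge[OF nonpos zeros(1) zeros(4)[unfolded aff_eq]]
  note edge_q = nonpos_aff_zero_at_edge[OF nonpos zeros(2) zeros(5)[unfolded aff_eq]]
  have recip: "z = 1 / c" if "c * z = 1" for c z :: real
    using inverse_unique[OF that] by (simp add: inverse_eq_divide)
  consider "u = 0" "v \<noteq> 0" | "u \<noteq> 0" "v = 0" | "u \<noteq> 0" "v \<noteq> 0" | "u = 0" "v = 0" by blast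
  then show ?thesis
  proof cases
    case 1
    then have "fst X = 0" using dx_pos by (simp add: u_def)
    then have "snd X = 1 / (b + of_int jp * dy)"
      using zeros(4) by (intro recip) (simp add: line_val_apply)
    moreover have "jp = 0 \<or> jp = int M" using edge_p 1 by (auto simp: neq_iff)
    ultimately show ?thesis using \<open>fst X = 0\<close> by (auto simp: prod_eq_iff)
  next
    case 2
    then have "snd X = 0" using dy_pos by (simp add: v_def)
    then have "fst X = 1 / (a + of_int kp * dx)"
      using zeros(4) by (intro recip) (simp add: line_val_apply)
    moreover have "kp = 0 \<or> kp = int N" using edge_p 2 by (auto simp: neq_iff)
    ultimately show ?thesis using \<open>snd X = 0\<close> by (auto simp: prod_eq_iff)
  next
    case 3
    then have "kp = kq" "jp = jq" using edge_p edge_q by (auto simp: neq_iff)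
    then show ?thesis using zeros(3) by simp
  next
    case 4
    then have "X = 0" using dx_pos dy_pos by (simp add: u_def v_def prod_eq_iff)
    then show ?thesis using zeros(4) by simp
  qed
qed

text \<open>The difference of a far and a near line equation through \<open>X\<close> is a linear form that vanishes
  at \<open>X\<close> and is nonnegative on the cell.\<close>

lemma mixed_supporting_line:
  assumes "far \<noteq> {}" "X \<in> cell" "mixed X"
  obtains l where "l \<noteq> 0" "\<And>Y. Y \<in> cell \<Longrightarrow> 0 \<le> l * det2 X Y"
proof -
  obtain p q where pq: "p \<in> far" "q \<in> near" "line_val X p = 0" "line_val X q = 0"
    using assms(3) by (auto simp: mixed_def)
  define n where "n = pt p - pt q"
  have inner_n: "inner n Y = line_val Y p - line_val Y q" for Y
    by (simp add: n_def line_val_def inner_diff_left)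
  have "n \<noteq> 0"
  proof
    assume "n = 0"
    then have "p = q" using pt_inj by (simp add: n_def)
    then show False using pq(1,2) far_near_disjoint by blast
  qed
  moreover have "inner n X = 0" using pq by (simp add: inner_n)
  ultimately obtain l where "l \<noteq> 0" "\<And>Y. inner n Y = l * det2 X Y"
    using orthogonal_eq_det2_multiple cell_nonzero[OF assms(1,2)] by metis
  moreover have "0 \<le> inner n Y" if "Y \<in> cell" for Y
    using cell_far[OF that pq(1)] cell_near[OF that pq(2)] by (simp add: inner_n)
  ultimately show thesis using that by metis
qed

lemma det2_nonzero_if_mixed:
  assumes "far \<noteq> {}" "X1 \<in> cell" "X2 \<in> cell" "mixed X2" "X1 \<noteq> X2"
  shows "det2 X1 X2 \<noteq> 0"
proof
  assume "det2 X1 X2 = 0"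
  then obtain t where t: "X2 = t *\<^sub>R X1"
    using det2_eq_0_imp_scaleR cell_nonzero[OF assms(1,2)] by blast
  obtain p q where pq: "p \<in> far" "q \<in> near" "line_val X2 p = 0" "line_val X2 q = 0"
    using assms(4) by (auto simp: mixed_def)
  then have "t * inner (pt p) X1 = 1" "t * inner (pt q) X1 = 1"
    by (simp_all add: t line_val_def)
  moreover have "1 \<le> inner (pt p) X1" "inner (pt q) X1 \<le> 1"
    using cell_far[OF assms(2) pq(1)] cell_near[OF assms(2) pq(2)] by (simp_all add: line_val_def)
  moreover from calculation(1,2) have "inner (pt p) X1 = inner (pt q) X1"
    by (metis mult_cancel_left mult_zero_left zero_neq_one)
  ultimately have "t = 1" by simp
  then show False using t assms(5) by simp
qed

text \<open>Each mixed vertex puts the cell into a half-plane bounded by the line through it and the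
  origin; for two distinct mixed vertices these half-planes have opposite orientations.\<close>

lemma at_most_two_mixed:
  assumes "far \<noteq> {}" and cell: "X1 \<in> cell" "X2 \<in> cell" "X3 \<in> cell"
    and mixed: "mixed X1" "mixed X2" "mixed X3"
    and distinct: "X1 \<noteq> X2" "X2 \<noteq> X3" "X1 \<noteq> X3"
  shows False
proof -
  obtain l1 l2 l3 where l: "l1 \<noteq> 0" "l2 \<noteq> 0" "l3 \<noteq> 0"
    and supp: "\<And>Y. Y \<in> cell \<Longrightarrow> 0 \<le> l1 * det2 X1 Y" "\<And>Y. Y \<in> cell \<Longrightarrow> 0 \<le> l2 * det2 X2 Y"
      "\<And>Y. Y \<in> cell \<Longrightarrow> 0 \<le> l3 * det2 X3 Y"
    using mixed_supporting_line[OF assms(1)] cell mixed by metis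
  have "l1 * l2 < 0"
    using opposite_signs[of l1 "det2 X1 X2" l2] supp(1)[OF cell(2)] supp(2)[OF cell(1)] l
      det2_swap[of X2 X1] det2_nonzero_if_mixed[OF assms(1) cell(1,2) mixed(2) distinct(1)]
    by simp
  moreover have "l1 * l3 < 0"
    using opposite_signs[of l1 "det2 X1 X3" l3] supp(1)[OF cell(3)] supp(3)[OF cell(1)] l
      det2_swap[of X3 X1] det2_nonzero_if_mixed[OF assms(1) cell(1,3) mixed(3) distinct(3)]
    by simp
  moreover have "l2 * l3 < 0"
    using opposite_signs[of l2 "det2 X2 X3" l3] supp(2)[OF cell(3)] supp(3)[OF cell(2)] l
      det2_swap[of X3 X2] det2_nonzero_if_mixed[OF assms(1) cell(2,3) mixed(3) distinct(2)]
    by simp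
  ultimately show False by (auto simp: mult_less_0_iff)
qed

lemma extreme_points_subset_four:
  assumes "bounded cell"
  obtains w x y z where "{X. X extreme_point_of cell} \<subseteq> {w, x, y, z}"
proof (cases "far = {}")
  case True
  then show thesis using that extreme_point_without_far_lines by blast
next
  case False
  have ext_cell: "X \<in> cell" if "X extreme_point_of cell" for X
    using that by (simp add: extreme_point_of_def)
  obtain w where w: "{X. X extreme_point_of cell \<and> pure_far X} \<subseteq> {w}"
    using ex_subset_singleton[of "{X. X extreme_point_of cell \<and> pure_far X}"]
      pure_far_unique[OF near_nonempty[OF assms False]] by blast
  obtain x where x: "{X. X extreme_point_of cell \<and> pure_near X} \<subseteq> {x}"
    using ex_subset_singleton[of "{X. X extreme_point_of cell \<and> pure_near X}"]
      pure_near_unique[OF False] by blast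
  obtain y z where yz: "{X. X extreme_point_of cell \<and> mixed X} \<subseteq> {y, z}"
    using ex_subset_doubleton[of "{X. X extreme_point_of cell \<and> mixed X}"]
      at_most_two_mixed[OF False] ext_cell by blast
  show thesis
    by (rule that[of w x y z]) (use w x yz pure_far_or_pure_near_or_mixed in blast)
qed

lemma cell_eq_convex_hull_of_four:
  assumes "bounded cell"
  shows "\<exists>V. finite V \<and> card V \<le> 4 \<and> cell = convex hull V"
proof -
  obtain w x y z where sub: "{X. X extreme_point_of cell} \<subseteq> {w, x, y, z}"
    using extreme_points_subset_four[OF assms] .
  have "cell = convex hull {X. X extreme_point_of cell}"
    using Krein_Milman_Minkowski assms closed_cell convex_cell compact_eq_bounded_closed by blast
  moreover have "card {X. X extreme_point_of cell} \<le> card {w, x, y, z}"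
    by (rule card_mono[OF _ sub]) simp
  moreover have "card {w, x, y, z} \<le> 4" by (simp add: card_insert_if)
  ultimately show ?thesis using finite_subset[OF sub] by fastforce
qed

end

theorem theorem4p3:
  fixes S :: "(real \<times> real) set" and R :: "(real \<times> real) set"
  assumes "is_rectangular_lattice S"
    and "R \<in> regions S"
    and "bounded R"
  shows "\<exists>V. finite V \<and> card V \<le> 4 \<and> R = convex hull V"
proof -
  obtain a b dx dy N M where "dx > 0" "dy > 0" and S: "S = rect_lattice_set a b dx dy N M"
    using assms(1) unfolding is_rectangular_lattice_def by blast
  interpret rect_lattice a b dx dy N M by unfold_locales fact+
  obtain C where C: "C \<in> components {X. \<forall>p\<in>idx. line_val X p \<noteq> 0}" and R: "R = closure C"
    using assms(2) by (auto simp: regions_def S lines_complement)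
  obtain X0 where "X0 \<in> C" using in_components_nonempty[OF C] by blast
  then have "\<forall>p\<in>idx. line_val X0 p \<noteq> 0" using in_components_subset[OF C] by blast
  then interpret lattice_cell a b dx dy N M X0 by unfold_locales
  have "R = cell" using closure_component_eq_cell[OF C \<open>X0 \<in> C\<close>] R by simp
  then show ?thesis using cell_eq_convex_hull_of_four assms(3) by simp
qed

end
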